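(* Let $K\ge2$, $0<q<p$ with $p+(K-1)q=1$. Each of the maps $\phi\mapsto\mathrm{Inv}(\phi)$, $\phi\mapsto\mathrm{InvP}(\phi)$, $\phi\mapsto\mathrm{InvN}(\phi)$, $\phi\mapsto\mathrm{MLE}^*(\phi)$, defined on $\Delta$ with values in $\mathbb{R}^K$, is continuous.
   Context: $\Delta=\{\theta\in\mathbb{R}^K:\theta_i\ge0,\sum_i\theta_i=1\}$. $\mathrm{Inv}(\phi)_i=\frac{\phi_i-q}{p-q}$; $\mathrm{InvN}(\phi)_i=\frac{\max(0,\mathrm{Inv}(\phi)_i)}{\sum_j\max(0,\mathrm{Inv}(\phi)_j)}$; $\mathrm{InvP}(\phi)=\arg\min_{\theta\in\Delta}\|\theta-\mathrm{Inv}(\phi)\|_2$. $\mathrm{MLE}^*(\phi)$: for real $\tau$ let $m(\tau)=|\{i:\phi_i<\tau\}|$, $c_\tau=\frac{1-m(\tau)q}{\sum_{i:\phi_i\ge\tau}\phi_i}$; let $\tau^*$ be the smallest $\tau\in\{\phi_1,\dots,\phi_K\}$ with $c_\tau\phi_i\ge q$ for all $i$ with $\phi_i\ge\tau$; $\mathrm{MLE}^*(\phi)_i=0$ if $\phi_i<\tau^*$ and $\frac{c_{\tau^*}\phi_i-q}{p-q}$ otherwise. *)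

theory Defs
  imports "HOL-Analysis.Analysis"
begin

text \<open>Vectors in R^K are modelled as real^'n with K = CARD('n).\<close>

definition prob_simplex :: "(real^'n) set" where
  "prob_simplex = {\<theta>. (\<forall>i. \<theta> $ i \<ge> 0) \<and> (\<Sum>i\<in>UNIV. \<theta> $ i) = 1}"

definition Inv :: "real \<Rightarrow> real \<Rightarrow> real^'n \<Rightarrow> real^'n" where
  "Inv p q \<phi> = (\<chi> i. (\<phi> $ i - q) / (p - q))"

definition InvN :: "real \<Rightarrow> real \<Rightarrow> real^'n \<Rightarrow> real^'n" where
  "InvN p q \<phi> = (\<chi> i. max 0 (Inv p q \<phi> $ i) / (\<Sum>j\<in>UNIV. max 0 (Inv p q \<phi> $ j)))"

definition InvP :: "real \<Rightarrow> real \<Rightarrow> real^'n \<Rightarrow> real^'n" where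
  "InvP p q \<phi> = closest_point prob_simplex (Inv p q \<phi>)"

definition mcount :: "real^'n \<Rightarrow> real \<Rightarrow> nat" where
  "mcount \<phi> \<tau> = card {i. \<phi> $ i < \<tau>}"

definition cconst :: "real \<Rightarrow> real^'n \<Rightarrow> real \<Rightarrow> real" where
  "cconst q \<phi> \<tau> = (1 - real (mcount \<phi> \<tau>) * q) / (\<Sum>i\<in>{i. \<phi> $ i \<ge> \<tau>}. \<phi> $ i)"

definition tau_star :: "real \<Rightarrow> real^'n \<Rightarrow> real" where
  "tau_star q \<phi> = Min {\<tau>. \<tau> \<in> range (\<lambda>i. \<phi> $ i) \<and>
      (\<forall>i. \<phi> $ i \<ge> \<tau> \<longrightarrow> cconst q \<phi> \<tau> * \<phi> $ i \<ge> q)}"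

definition MLEstar :: "real \<Rightarrow> real \<Rightarrow> real^'n \<Rightarrow> real^'n" where
  "MLEstar p q \<phi> = (\<chi> i. if \<phi> $ i < tau_star q \<phi> then 0
      else (cconst q \<phi> (tau_star q \<phi>) * \<phi> $ i - q) / (p - q))"

end

(*
  Inv is affine, and InvP is Inv followed by the projection onto the closed convex simplex,
  which is continuous. On the simplex the coordinates of Inv sum to 1, so the denominator of
  InvN is at least 1.

  For MLE*, one shows MLE*(phi)_i = max(0, c phi_i - q) / (p - q) with c = c_{tau*}, where c is
  the root of the equation sum_i max(0, c phi_i - q) = 1 - K q. The left-hand side is continuous
  in phi and strictly increasing in c wherever it is positive, so the root c, and with it MLE*,
  depends continuously on phi.
*)

theory Submission
  imports Defs
begin

lemma closed_prob_simplex: "closed (prob_simplex :: (real^'n) set)"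
proof -
  have "prob_simplex = (\<Inter>i. {x::real^'n. 0 \<le> x $ i}) \<inter> {x. (\<Sum>i\<in>UNIV. x $ i) = 1}"
    unfolding prob_simplex_def by auto
  moreover have "closed {x::real^'n. 0 \<le> x $ i}" for i
    by (intro closed_Collect_le continuous_intros)
  moreover have "closed {x::real^'n. (\<Sum>i\<in>UNIV. x $ i) = 1}"
    by (intro closed_Collect_eq continuous_intros)
  ultimately show ?thesis
    by (metis closed_INT closed_Int)
qed

lemma convex_prob_simplex: "convex (prob_simplex :: (real^'n) set)"
  unfolding convex_def prob_simplex_def
  by (auto simp: sum.distrib sum_distrib_left[symmetric])

lemma prob_simplex_nonempty: "(prob_simplex :: (real^'n) set) \<noteq> {}"
proof -
  have "(\<chi> i. 1 / real CARD('n)) \<in> (prob_simplex :: (real^'n) set)"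
    unfolding prob_simplex_def by auto
  then show ?thesis
    by blast
qed

lemma continuous_on_Inv: "continuous_on S (Inv p q :: real^'n \<Rightarrow> real^'n)"
  unfolding Inv_def divide_inverse by (intro continuous_intros)

lemma continuous_on_InvP: "continuous_on S (InvP p q :: real^'n \<Rightarrow> real^'n)"
proof -
  have "InvP p q = closest_point prob_simplex \<circ> (Inv p q :: real^'n \<Rightarrow> real^'n)"
    by (simp add: InvP_def fun_eq_iff)
  then show ?thesis
    using continuous_on_compose[OF continuous_on_Inv continuous_on_closest_point]
      convex_prob_simplex closed_prob_simplex prob_simplex_nonempty
    by metis
qed

lemma sum_Inv:
  fixes \<phi> :: "real^'n"
  assumes "\<phi> \<in> prob_simplex" and "p + (real CARD('n) - 1) * q = 1" and "p \<noteq> q"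
  shows "(\<Sum>i\<in>UNIV. Inv p q \<phi> $ i) = 1"
proof -
  have "(\<Sum>i\<in>UNIV. Inv p q \<phi> $ i) = (\<Sum>i\<in>UNIV. \<phi> $ i - q) / (p - q)"
    by (simp add: Inv_def sum_divide_distrib)
  also have "\<dots> = (1 - real CARD('n) * q) / (p - q)"
    using assms(1) by (simp add: sum_subtractf prob_simplex_def)
  also have "\<dots> = 1"
    using assms(2,3) by (simp add: algebra_simps)
  finally show ?thesis .
qed

lemma continuous_on_InvN:
  assumes "p + (real CARD('n) - 1) * q = 1" and "p \<noteq> q"
  shows "continuous_on prob_simplex (InvN p q :: real^'n \<Rightarrow> real^'n)"
proof -
  have "(\<Sum>j\<in>UNIV. max 0 (Inv p q \<phi> $ j)) \<noteq> 0" if "\<phi> \<in> prob_simplex" for \<phi> :: "real^'n"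
  proof -
    have "1 = (\<Sum>j\<in>UNIV. Inv p q \<phi> $ j)"
      using sum_Inv[OF that assms] by simp
    also have "\<dots> \<le> (\<Sum>j\<in>UNIV. max 0 (Inv p q \<phi> $ j))"
      by (intro sum_mono) simp
    finally show ?thesis
      by linarith
  qed
  then show ?thesis
    unfolding InvN_def by (intro continuous_intros continuous_on_Inv) auto
qed

definition mle_thresholds :: "real \<Rightarrow> real^'n \<Rightarrow> real set" where
  "mle_thresholds q \<phi> = {\<tau>. \<tau> \<in> range (\<lambda>i. \<phi> $ i) \<and>
      (\<forall>i. \<phi> $ i \<ge> \<tau> \<longrightarrow> cconst q \<phi> \<tau> * \<phi> $ i \<ge> q)}"

definition mle_scale :: "real \<Rightarrow> real^'n \<Rightarrow> real" where
  "mle_scale q \<phi> = cconst q \<phi> (tau_star q \<phi>)"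

lemma tau_star_eq_Min: "tau_star q \<phi> = Min (mle_thresholds q \<phi>)"
  unfolding tau_star_def mle_thresholds_def ..

lemma real_mcount_add_card_ge:
  fixes \<phi> :: "real^'n"
  shows "real (mcount \<phi> t) + real (card {i. \<phi> $ i \<ge> t}) = real CARD('n)"
proof -
  have "{i. \<phi> $ i < t} \<union> {i. \<phi> $ i \<ge> t} = UNIV" and "{i. \<phi> $ i < t} \<inter> {i. \<phi> $ i \<ge> t} = {}"
    by auto
  then have "card {i. \<phi> $ i < t} + card {i. \<phi> $ i \<ge> t} = CARD('n)"
    by (metis card_Un_disjoint finite)
  then show ?thesis
    unfolding mcount_def by (metis of_nat_add)
qed

lemma cconst_pos:
  fixes \<phi> :: "real^'n"
  assumes "\<forall>i. 0 \<le> \<phi> $ i" and "0 < \<phi> $ j" and "t \<le> \<phi> $ j"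
    and "0 \<le> q" and "real CARD('n) * q < 1"
  shows "0 < cconst q \<phi> t"
proof -
  have "mcount \<phi> t \<le> CARD('n)"
    unfolding mcount_def by (rule card_mono) auto
  then have "real (mcount \<phi> t) * q < 1"
    using assms(4,5) by (smt (verit) mult_right_mono of_nat_le_iff)
  moreover have "\<phi> $ j \<le> (\<Sum>i\<in>{i. \<phi> $ i \<ge> t}. \<phi> $ i)"
    using assms(1,3) by (intro member_le_sum) auto
  ultimately show ?thesis
    using assms(2) unfolding cconst_def by simp
qed

lemma Max_in_mle_thresholds:
  fixes \<phi> :: "real^'n"
  assumes "\<forall>i. \<phi> $ i \<le> \<phi> $ j" and "0 < \<phi> $ j" and "real CARD('n) * q \<le> 1"
  shows "\<phi> $ j \<in> mle_thresholds q \<phi>"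
proof -
  define M where "M = \<phi> $ j"
  define A where "A = {i. \<phi> $ i \<ge> M}"
  define k where "k = real (card A)"
  have A_eq: "A = {i. \<phi> $ i = M}"
    using assms(1) unfolding A_def M_def by (auto intro: antisym)
  have "j \<in> A"
    unfolding A_def M_def by simp
  then have "1 \<le> k"
    unfolding k_def using card_gt_0_iff[of A] by fastforce
  have "(\<Sum>i\<in>A. \<phi> $ i) = k * M"
    unfolding k_def A_eq by simp
  moreover have "real (mcount \<phi> M) = real CARD('n) - k"
    using real_mcount_add_card_ge[of \<phi> M] unfolding k_def A_def by linarith
  ultimately have "cconst q \<phi> M * M = (1 - (real CARD('n) - k) * q) / k"
    using assms(2) unfolding cconst_def M_def A_def by simp
  also have "\<dots> \<ge> q"
    using \<open>1 \<le> k\<close> assms(3) by (simp add: field_simps)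
  finally have "q \<le> cconst q \<phi> M * \<phi> $ i" if "M \<le> \<phi> $ i" for i
    using that assms(1) unfolding M_def by (metis antisym)
  then show ?thesis
    unfolding mle_thresholds_def M_def by blast
qed

(* Lowering the threshold from tau to the next value t adds k q to the numerator and k t to
   the denominator of cconst, which does not change the sign of cconst * t - q. *)
lemma cconst_adjacent_levels:
  fixes \<phi> :: "real^'n"
  assumes "\<forall>i. 0 \<le> \<phi> $ i" and "0 \<le> t" and "t < \<tau>" and "\<tau> \<le> \<phi> $ j"
    and "\<forall>i. \<phi> $ i < \<tau> \<longrightarrow> \<phi> $ i \<le> t"
  shows "cconst q \<phi> t * t < q \<longleftrightarrow> cconst q \<phi> \<tau> * t < q"
proof -
  define S where "S s = (\<Sum>i\<in>{i. \<phi> $ i \<ge> s}. \<phi> $ i)" for s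
  define L where "L = {i. \<phi> $ i = t}"
  define k where "k = real (card L)"
  have ge_t: "{i. \<phi> $ i \<ge> t} = {i. \<phi> $ i \<ge> \<tau>} \<union> L"
    using assms(3,5) unfolding L_def by (auto simp: not_less[symmetric])
  have lt_\<tau>: "{i. \<phi> $ i < \<tau>} = {i. \<phi> $ i < t} \<union> L"
    using assms(3,5) unfolding L_def by (auto simp: not_less[symmetric])
  have "S t = S \<tau> + (\<Sum>i\<in>L. \<phi> $ i)"
    unfolding S_def ge_t using assms(3) unfolding L_def by (subst sum.union_disjoint) auto
  then have S_t: "S t = S \<tau> + k * t"
    unfolding k_def L_def by simp
  have m_\<tau>: "real (mcount \<phi> \<tau>) = real (mcount \<phi> t) + k"
    unfolding mcount_def lt_\<tau> k_def L_def by (subst card_Un_disjoint) auto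
  have "\<phi> $ j \<le> S \<tau>"
    unfolding S_def using assms(1,4) by (intro member_le_sum) auto
  then have "0 < S \<tau>" and "0 < S t"
    using assms(2-4) S_t k_def by (auto intro!: add_pos_nonneg)
  have "cconst q \<phi> t * t < q \<longleftrightarrow> (1 - real (mcount \<phi> t) * q) * t < q * S t"
    using \<open>0 < S t\<close> unfolding cconst_def S_def by (simp add: field_simps)
  also have "\<dots> \<longleftrightarrow> (1 - real (mcount \<phi> \<tau>) * q) * t < q * S \<tau>"
    unfolding S_t m_\<tau> by (simp add: algebra_simps)
  also have "\<dots> \<longleftrightarrow> cconst q \<phi> \<tau> * t < q"
    using \<open>0 < S \<tau>\<close> unfolding cconst_def S_def by (simp add: field_simps)
  finally show ?thesis .
qed

lemma prob_simplex_obtains_max: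
  fixes \<phi> :: "real^'n"
  assumes "\<phi> \<in> prob_simplex"
  obtains j where "\<forall>i. \<phi> $ i \<le> \<phi> $ j" and "0 < \<phi> $ j"
proof -
  have nonneg: "\<forall>i. 0 \<le> \<phi> $ i" and sum: "(\<Sum>i\<in>UNIV. \<phi> $ i) = 1"
    using assms by (simp_all add: prob_simplex_def)
  have "Max (range (\<lambda>i. \<phi> $ i)) \<in> range (\<lambda>i. \<phi> $ i)"
    by (intro Max_in) auto
  then obtain j where "\<phi> $ j = Max (range (\<lambda>i. \<phi> $ i))"
    by (metis rangeE)
  then have max: "\<forall>i. \<phi> $ i \<le> \<phi> $ j"
    by simp
  have "0 < \<phi> $ j"
  proof (rule ccontr)
    assume "\<not> 0 < \<phi> $ j"
    then have "\<phi> $ i = 0" for i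
      using nonneg max by (meson antisym not_less order.trans)
    then show False
      using sum by simp
  qed
  with max show thesis
    by (rule that)
qed

lemma tau_star_le:
  assumes "\<tau> \<in> mle_thresholds q \<phi>"
  shows "tau_star q \<phi> \<le> \<tau>"
  unfolding tau_star_eq_Min using assms by (simp add: mle_thresholds_def)

lemma tau_star_in_mle_thresholds:
  fixes \<phi> :: "real^'n"
  assumes "\<phi> \<in> prob_simplex" and "real CARD('n) * q \<le> 1"
  shows "tau_star q \<phi> \<in> mle_thresholds q \<phi>"
proof -
  obtain j where "\<forall>i. \<phi> $ i \<le> \<phi> $ j" and "0 < \<phi> $ j"
    using prob_simplex_obtains_max[OF assms(1)] .
  then have "mle_thresholds q \<phi> \<noteq> {}"
    using Max_in_mle_thresholds assms(2) by blast
  then show ?thesis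
    unfolding tau_star_eq_Min by (intro Min_in) (simp_all add: mle_thresholds_def)
qed

lemma mle_scale_pos:
  fixes \<phi> :: "real^'n"
  assumes "\<phi> \<in> prob_simplex" and "0 \<le> q" and "real CARD('n) * q < 1"
  shows "0 < mle_scale q \<phi>"
proof -
  obtain j where "\<forall>i. \<phi> $ i \<le> \<phi> $ j" and "0 < \<phi> $ j"
    using prob_simplex_obtains_max[OF assms(1)] .
  moreover have "\<forall>i. 0 \<le> \<phi> $ i"
    using assms(1) by (simp add: prob_simplex_def)
  ultimately show ?thesis
    unfolding mle_scale_def using assms(2,3)
    by (intro cconst_pos tau_star_le Max_in_mle_thresholds) auto
qed

lemma mle_scale_ge:
  fixes \<phi> :: "real^'n"
  assumes "\<phi> \<in> prob_simplex" and "real CARD('n) * q \<le> 1" and "tau_star q \<phi> \<le> \<phi> $ i"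
  shows "q \<le> mle_scale q \<phi> * \<phi> $ i"
  using tau_star_in_mle_thresholds[OF assms(1,2)] assms(3)
  unfolding mle_scale_def mle_thresholds_def by blast

lemma mle_scale_less:
  fixes \<phi> :: "real^'n"
  assumes "\<phi> \<in> prob_simplex" and "0 \<le> q" and "real CARD('n) * q < 1"
    and "\<phi> $ j < tau_star q \<phi>"
  shows "mle_scale q \<phi> * \<phi> $ j < q"
proof -
  define \<tau> where "\<tau> = tau_star q \<phi>"
  define L where "L = {x \<in> range (\<lambda>i. \<phi> $ i). x < \<tau>}"
  define t where "t = Max L"
  have nonneg: "\<forall>i. 0 \<le> \<phi> $ i"
    using assms(1) by (simp add: prob_simplex_def)
  have "finite L" and "\<phi> $ j \<in> L"
    using assms(4) unfolding L_def \<tau>_def by auto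
  then have "t \<in> L" and "\<phi> $ j \<le> t"
    unfolding t_def by (blast intro: Max_in, simp)
  have below: "\<forall>i. \<phi> $ i < \<tau> \<longrightarrow> \<phi> $ i \<le> t"
    using \<open>finite L\<close> unfolding t_def L_def by simp
  have "t < \<tau>" and "0 \<le> t"
    using \<open>t \<in> L\<close> nonneg unfolding L_def by auto
  then have "t \<notin> mle_thresholds q \<phi>"
    using tau_star_le unfolding \<tau>_def by (meson not_le)
  with \<open>t \<in> L\<close> obtain i where "t \<le> \<phi> $ i" and "cconst q \<phi> t * \<phi> $ i < q"
    unfolding mle_thresholds_def L_def by auto
  obtain m where "\<forall>i. \<phi> $ i \<le> \<phi> $ m" and "0 < \<phi> $ m"
    using prob_simplex_obtains_max[OF assms(1)] .
  then have "\<tau> \<le> \<phi> $ m"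
    unfolding \<tau>_def using assms(3) by (intro tau_star_le Max_in_mle_thresholds) auto
  then have "0 < cconst q \<phi> t"
    using \<open>t < \<tau>\<close> \<open>0 < \<phi> $ m\<close> nonneg assms(2,3) by (intro cconst_pos) auto
  then have "cconst q \<phi> t * t < q"
    using \<open>t \<le> \<phi> $ i\<close> \<open>cconst q \<phi> t * \<phi> $ i < q\<close>
    by (meson le_less_trans mult_left_mono less_imp_le)
  then have "mle_scale q \<phi> * t < q"
    unfolding mle_scale_def \<tau>_def[symmetric]
    using cconst_adjacent_levels[OF nonneg \<open>0 \<le> t\<close> \<open>t < \<tau>\<close> \<open>\<tau> \<le> \<phi> $ m\<close> below] by blast
  moreover have "mle_scale q \<phi> * \<phi> $ j \<le> mle_scale q \<phi> * t"
    using \<open>\<phi> $ j \<le> t\<close> mle_scale_pos[OF assms(1-3)] by (simp add: mult_left_mono)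
  ultimately show ?thesis
    by linarith
qed

lemma max_mle_scale_eq:
  fixes \<phi> :: "real^'n"
  assumes "\<phi> \<in> prob_simplex" and "0 \<le> q" and "real CARD('n) * q < 1"
  shows "max 0 (mle_scale q \<phi> * \<phi> $ i - q)
    = (if \<phi> $ i < tau_star q \<phi> then 0 else mle_scale q \<phi> * \<phi> $ i - q)"
  using mle_scale_less[OF assms, of i] mle_scale_ge[OF assms(1), of q i] assms(3)
  by (auto simp: not_less)

lemma MLEstar_eq_max:
  fixes \<phi> :: "real^'n"
  assumes "\<phi> \<in> prob_simplex" and "0 \<le> q" and "real CARD('n) * q < 1"
  shows "MLEstar p q \<phi> = (\<chi> i. max 0 (mle_scale q \<phi> * \<phi> $ i - q) / (p - q))"
  unfolding MLEstar_def vec_eq_iff max_mle_scale_eq[OF assms]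
  by (simp add: mle_scale_def)

definition excess :: "real \<Rightarrow> real^'n \<Rightarrow> real \<Rightarrow> real" where
  "excess q \<phi> a = (\<Sum>i\<in>UNIV. max 0 (a * \<phi> $ i - q))"

lemma excess_mle_scale:
  fixes \<phi> :: "real^'n"
  assumes "\<phi> \<in> prob_simplex" and "0 \<le> q" and "real CARD('n) * q < 1"
  shows "excess q \<phi> (mle_scale q \<phi>) = 1 - real CARD('n) * q"
proof -
  define \<tau> where "\<tau> = tau_star q \<phi>"
  define c where "c = mle_scale q \<phi>"
  define A where "A = {i. \<phi> $ i \<ge> \<tau>}"
  have c_eq: "c = (1 - real (mcount \<phi> \<tau>) * q) / (\<Sum>i\<in>A. \<phi> $ i)"
    unfolding c_def mle_scale_def cconst_def A_def \<tau>_def ..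
  moreover have "0 < c"
    unfolding c_def using mle_scale_pos[OF assms] .
  ultimately have c_sum: "c * (\<Sum>i\<in>A. \<phi> $ i) = 1 - real (mcount \<phi> \<tau>) * q"
    by auto
  have "excess q \<phi> c = (\<Sum>i\<in>A. c * \<phi> $ i - q)"
    unfolding excess_def c_def max_mle_scale_eq[OF assms] A_def \<tau>_def
    by (simp add: sum.If_cases not_less Collect_neg_eq[symmetric])
  also have "\<dots> = c * (\<Sum>i\<in>A. \<phi> $ i) - real (card A) * q"
    by (simp add: sum_subtractf sum_distrib_left)
  also have "\<dots> = 1 - (real (mcount \<phi> \<tau>) + real (card A)) * q"
    unfolding c_sum by (simp add: algebra_simps)
  also have "\<dots> = 1 - real CARD('n) * q"
    unfolding A_def real_mcount_add_card_ge ..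
  finally show ?thesis
    unfolding c_def .
qed

lemma continuous_on_implicit_real:
  fixes G :: "'a::topological_space \<Rightarrow> real \<Rightarrow> real" and f :: "'a \<Rightarrow> real"
  assumes cont: "\<And>a. continuous_on S (\<lambda>x. G x a)"
    and root: "\<And>x. x \<in> S \<Longrightarrow> G x (f x) = r"
    and below: "\<And>x a. x \<in> S \<Longrightarrow> a < f x \<Longrightarrow> G x a < r"
    and above: "\<And>x a. x \<in> S \<Longrightarrow> f x < a \<Longrightarrow> r < G x a"
  shows "continuous_on S f"
  unfolding continuous_on_def
proof (intro ballI order_tendstoI)
  fix x a
  assume "x \<in> S"
  have near: "\<forall>\<^sub>F y in at x within S. y \<in> S"
    by (simp add: eventually_at_filter)
  have lim: "((\<lambda>y. G y a) \<longlongrightarrow> G x a) (at x within S)"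
    using cont \<open>x \<in> S\<close> by (simp add: continuous_on_def)
  show "\<forall>\<^sub>F y in at x within S. a < f y" if "a < f x"
  proof -
    have "\<forall>\<^sub>F y in at x within S. G y a < r"
      using order_tendstoD(2)[OF lim below[OF \<open>x \<in> S\<close> that]] .
    with near show ?thesis
      by eventually_elim (use above root in \<open>smt (verit)\<close>)
  qed
  show "\<forall>\<^sub>F y in at x within S. f y < a" if "f x < a"
  proof -
    have "\<forall>\<^sub>F y in at x within S. r < G y a"
      using order_tendstoD(1)[OF lim above[OF \<open>x \<in> S\<close> that]] .
    with near show ?thesis
      by eventually_elim (use below root in \<open>smt (verit)\<close>)
  qed
qed

lemma excess_mono:
  fixes \<phi> :: "real^'n"
  assumes "\<forall>i. 0 \<le> \<phi> $ i" and "a \<le> b"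
  shows "excess q \<phi> a \<le> excess q \<phi> b"
  unfolding excess_def
  using assms by (intro sum_mono max.mono order.refl diff_right_mono mult_right_mono) auto

lemma excess_strict_mono:
  fixes \<phi> :: "real^'n"
  assumes "\<forall>i. 0 \<le> \<phi> $ i" and "0 \<le> q" and "a < b" and "0 < excess q \<phi> b"
  shows "excess q \<phi> a < excess q \<phi> b"
proof -
  have "\<exists>i. q < b * \<phi> $ i"
  proof (rule ccontr)
    assume "\<nexists>i. q < b * \<phi> $ i"
    then have "excess q \<phi> b = 0"
      unfolding excess_def by (intro sum.neutral) (auto simp: not_less)
    with assms(4) show False
      by simp
  qed
  then obtain i where "q < b * \<phi> $ i" ..
  then have "\<phi> $ i \<noteq> 0"
    using assms(2) by auto
  then have "0 < \<phi> $ i"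
    using assms(1) by (simp add: order.not_eq_order_implies_strict)
  then have "max 0 (a * \<phi> $ i - q) < max 0 (b * \<phi> $ i - q)"
    using \<open>q < b * \<phi> $ i\<close> assms(3) by simp
  moreover have "\<forall>j\<in>UNIV. max 0 (a * \<phi> $ j - q) \<le> max 0 (b * \<phi> $ j - q)"
    using assms(1,3) by (intro ballI max.mono order.refl diff_right_mono mult_right_mono) auto
  ultimately show ?thesis
    unfolding excess_def by (intro sum_strict_mono_ex1) auto
qed

lemma continuous_on_mle_scale:
  assumes "0 \<le> q" and "real CARD('n) * q < 1"
  shows "continuous_on (prob_simplex :: (real^'n) set) (mle_scale q)"
proof (rule continuous_on_implicit_real[where G = "excess q" and r = "1 - real CARD('n) * q"])
  show "continuous_on prob_simplex (\<lambda>\<phi>. excess q \<phi> a)" for a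
    unfolding excess_def by (intro continuous_intros)
  fix \<phi> :: "real^'n" and a
  assume \<phi>: "\<phi> \<in> prob_simplex"
  then have nonneg: "\<forall>i. 0 \<le> \<phi> $ i"
    by (simp add: prob_simplex_def)
  have root: "excess q \<phi> (mle_scale q \<phi>) = 1 - real CARD('n) * q"
    using excess_mle_scale[OF \<phi> assms] .
  then show "excess q \<phi> (mle_scale q \<phi>) = 1 - real CARD('n) * q" .
  show "excess q \<phi> a < 1 - real CARD('n) * q" if "a < mle_scale q \<phi>"
    using excess_strict_mono[OF nonneg assms(1) that] root assms(2) by simp
  show "1 - real CARD('n) * q < excess q \<phi> a" if "mle_scale q \<phi> < a"
  proof -
    have "0 < excess q \<phi> a"
      using excess_mono[OF nonneg less_imp_le[OF that], of q] root assms(2) by simp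
    then show ?thesis
      using excess_strict_mono[OF nonneg assms(1) that] root by simp
  qed
qed

lemma continuous_on_MLEstar:
  assumes "0 \<le> q" and "real CARD('n) * q < 1"
  shows "continuous_on prob_simplex (MLEstar p q :: real^'n \<Rightarrow> real^'n)"
proof -
  have "continuous_on prob_simplex
      (\<lambda>\<phi>::real^'n. \<chi> i. max 0 (mle_scale q \<phi> * \<phi> $ i - q) / (p - q))"
    unfolding divide_inverse by (intro continuous_intros continuous_on_mle_scale assms)
  then show ?thesis
    using MLEstar_eq_max[OF _ assms] continuous_on_cong by force
qed

theorem lemma5:
  fixes p q :: real
  assumes "CARD('n::finite) \<ge> 2"
    and "0 < q" and "q < p"
    and "p + (real CARD('n) - 1) * q = 1"
  shows "continuous_on prob_simplex (Inv p q :: real^'n \<Rightarrow> real^'n)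
       \<and> continuous_on prob_simplex (InvP p q :: real^'n \<Rightarrow> real^'n)
       \<and> continuous_on prob_simplex (InvN p q :: real^'n \<Rightarrow> real^'n)
       \<and> continuous_on prob_simplex (MLEstar p q :: real^'n \<Rightarrow> real^'n)"
proof -
  have "real CARD('n) * q < 1"
    using assms(3,4) by (simp add: algebra_simps)
  then show ?thesis
    using continuous_on_Inv continuous_on_InvP continuous_on_InvN[OF assms(4)]
      continuous_on_MLEstar[of q p] assms(2,3) by auto
qed

end
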